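(* Let $N,K\ge 1$, $\mathcal{L}\in\mathbb{R}^{N\times N}$, $e^{(0)}\in\mathbb{R}^N$, and $C_1,\dots,C_K\in\mathbb{R}^{N\times N}$. Suppose there is a real orthogonal matrix $P$ and real diagonal matrices $\Lambda_1,\dots,\Lambda_K$ with $I_N-C_j\mathcal{L}=P\Lambda_jP^{-1}$ and $\|I_N-C_j\mathcal{L}\|_2\le 1$ for all $j\in[K]$. Define $h:[K]^*\to\mathbb{R}$ by $h(S)=\|(I_N-C_{S_{|S|}}\mathcal{L})\cdots(I_N-C_{S_1}\mathcal{L})e^{(0)}\|_2^2$ (with $h(\emptyset)=\|e^{(0)}\|_2^2$). Then $h$ is sequence supermodular: for all $S,S'\in[K]^*$ with $S\preceq S'$ and all $\omega\in[K]$, $$h(S)-h(S\oplus\omega)\ge h(S')-h(S'\oplus\omega).$$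
   Context: $[K]=\{1,\dots,K\}$; $[K]^*$ is the set of all finite sequences (including the empty sequence) with entries in $[K]$. $S\oplus S'$ denotes concatenation and $S\oplus\omega=S\oplus(\omega)$. $S\preceq S'$ ($S$ is a prefix of $S'$) means $S'=S\oplus L$ for some $L\in[K]^*$. $\|\cdot\|_2$ on matrices is the operator (spectral) norm. *)

theory Defs
  imports "HOL-Analysis.Analysis"
begin

definition diag_mat :: "real^'n^'n \<Rightarrow> bool" where
  "diag_mat D \<longleftrightarrow> (\<forall>i j. i \<noteq> j \<longrightarrow> D $ i $ j = 0)"

text \<open>Error after applying the sequence S (first element applied first):
  (I - C_{S_|S|} L) ... (I - C_{S_1} L) e0.\<close>
definition seq_err :: "(nat \<Rightarrow> real^'n^'n) \<Rightarrow> real^'n^'n \<Rightarrow> real^'n \<Rightarrow> nat list \<Rightarrow> real^'n" where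
  "seq_err C L e0 S = foldl (\<lambda>v j. (mat 1 - C j ** L) *v v) e0 S"

definition h_fun :: "(nat \<Rightarrow> real^'n^'n) \<Rightarrow> real^'n^'n \<Rightarrow> real^'n \<Rightarrow> nat list \<Rightarrow> real" where
  "h_fun C L e0 S = (norm (seq_err C L e0 S))^2"

end

theory Submission
  imports Defs
begin

text \<open>Conjugation by the orthogonal \<open>P\<close> diagonalises all iteration matrices \<open>I - C\<^sub>j L\<close>
  at once and preserves norms. With \<open>a = P\<^sup>T e0\<close> and \<open>\<lambda>\<^sub>j\<^sub>i\<close> the diagonal entries of \<open>\<Lambda>\<^sub>j\<close>
  this gives \<open>h(S) = (\<Sum>i. a\<^sub>i\<^sup>2 \<Prod>j\<in>S. \<lambda>\<^sub>j\<^sub>i\<^sup>2)\<close>, and \<open>\<bar>\<lambda>\<^sub>j\<^sub>i\<bar> \<le> \<parallel>I - C\<^sub>j L\<parallel>\<^sub>2 \<le> 1\<close>.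
  So the marginal decrease \<open>h(S) - h(S \<oplus> \<omega>)\<close> is the sum of the nonnegative terms
  \<open>a\<^sub>i\<^sup>2 (1 - \<lambda>\<^sub>\<omega>\<^sub>i\<^sup>2) \<Prod>j\<in>S. \<lambda>\<^sub>j\<^sub>i\<^sup>2\<close>, each of which can only shrink when \<open>S\<close> is extended,
  since the extra factors lie in \<open>[0,1]\<close>.\<close>

lemma prod_list_unit_interval:
  fixes xs :: "'a::linordered_semidom list"
  assumes "\<And>x. x \<in> set xs \<Longrightarrow> 0 \<le> x \<and> x \<le> 1"
  shows "0 \<le> prod_list xs \<and> prod_list xs \<le> 1"
  using assms by (induction xs) (auto intro: mult_le_one)

lemma sum_prod_list_sequence_supermodular:
  fixes q :: "nat \<Rightarrow> 'i::finite \<Rightarrow> real" and a :: "'i \<Rightarrow> real"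
  assumes q: "\<And>j i. j \<in> set (S @ T @ [\<omega>]) \<Longrightarrow> 0 \<le> q j i \<and> q j i \<le> 1"
    and a: "\<And>i. 0 \<le> a i"
  defines "g \<equiv> \<lambda>R. \<Sum>i\<in>UNIV. (\<Prod>j\<leftarrow>R. q j i) * a i"
  shows "g (S @ T) - g (S @ T @ [\<omega>]) \<le> g S - g (S @ [\<omega>])"
proof -
  have diff: "g R - g (R @ [\<omega>]) = (\<Sum>i\<in>UNIV. (\<Prod>j\<leftarrow>R. q j i) * a i * (1 - q \<omega> i))" for R
    unfolding g_def by (simp add: sum_subtractf[symmetric] algebra_simps)
  have "g (S @ T) - g (S @ T @ [\<omega>])
      = (\<Sum>i\<in>UNIV. (\<Prod>j\<leftarrow>S. q j i) * (a i * (1 - q \<omega> i)) * (\<Prod>j\<leftarrow>T. q j i))"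
    using diff[of "S @ T"] by (simp add: ac_simps)
  also have "\<dots> \<le> (\<Sum>i\<in>UNIV. (\<Prod>j\<leftarrow>S. q j i) * (a i * (1 - q \<omega> i)))"
  proof (rule sum_mono)
    fix i
    have "0 \<le> (\<Prod>j\<leftarrow>S. q j i)" "(\<Prod>j\<leftarrow>T. q j i) \<le> 1"
      using q prod_list_unit_interval[of "map (\<lambda>j. q j i) S"]
        prod_list_unit_interval[of "map (\<lambda>j. q j i) T"] by auto
    moreover have "0 \<le> a i * (1 - q \<omega> i)"
      using a q by simp
    ultimately show "(\<Prod>j\<leftarrow>S. q j i) * (a i * (1 - q \<omega> i)) * (\<Prod>j\<leftarrow>T. q j i)
        \<le> (\<Prod>j\<leftarrow>S. q j i) * (a i * (1 - q \<omega> i))"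
      by (simp add: mult_left_le)
  qed
  also have "\<dots> = g S - g (S @ [\<omega>])"
    using diff[of S] by (simp add: ac_simps)
  finally show ?thesis .
qed

lemma matrix_inv_orthogonal_matrix:
  fixes P :: "real^'n^'n"
  assumes "orthogonal_matrix P"
  shows "matrix_inv P = transpose P"
proof -
  have inv: "P ** transpose P = mat 1 \<and> transpose P ** P = mat 1"
    using assms unfolding orthogonal_matrix_def by auto
  have right_inv: "P ** matrix_inv P = mat 1"
    unfolding matrix_inv_def by (rule someI[of _ "transpose P", THEN conjunct1]) (rule inv)
  have "matrix_inv P = (transpose P ** P) ** matrix_inv P"
    using inv by simp
  also have "\<dots> = transpose P ** (P ** matrix_inv P)"
    by (simp add: matrix_mul_assoc)
  finally show ?thesis
    using right_inv by simp
qed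

lemma norm_orthogonal_matrix_vector:
  fixes Q :: "real^'n^'n"
  assumes "orthogonal_matrix Q"
  shows "norm (Q *v x) = norm x"
  using assms orthogonal_transformation_matrix orthogonal_transformation_norm
  by (metis matrix_of_matrix_vector_mul matrix_vector_mul_linear)

lemma diag_mat_matrix_vector_nth:
  assumes "diag_mat D"
  shows "(D *v x) $ i = D $ i $ i * x $ i"
proof -
  have "(D *v x) $ i = (\<Sum>j\<in>UNIV. D $ i $ j * x $ j)"
    by (simp add: matrix_vector_mult_def)
  also have "\<dots> = (\<Sum>j\<in>{i}. D $ i $ j * x $ j)"
    by (rule sum.mono_neutral_right) (use assms in \<open>auto simp: diag_mat_def\<close>)
  finally show ?thesis by simp
qed

lemma norm_le_onorm_orthogonal_conjugate:
  fixes P D :: "real^'n^'n"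
  assumes "orthogonal_matrix P"
  shows "norm (D *v x) \<le> onorm ((*v) (P ** D ** transpose P)) * norm x"
proof -
  have "P ** D ** transpose P *v (P *v x) = P *v (D *v ((transpose P ** P) *v x))"
    by (simp only: matrix_vector_mul_assoc matrix_mul_assoc)
  also have "\<dots> = P *v (D *v x)"
    using assms by (simp add: orthogonal_matrix)
  finally have "norm (D *v x) = norm ((P ** D ** transpose P) *v (P *v x))"
    using assms by (simp add: norm_orthogonal_matrix_vector)
  also have "\<dots> \<le> onorm ((*v) (P ** D ** transpose P)) * norm (P *v x)"
    by (rule onorm[OF matrix_vector_mul_bounded_linear])
  finally show ?thesis
    using assms by (simp add: norm_orthogonal_matrix_vector)
qed

lemma abs_diagonal_entry_le_onorm_orthogonal_conjugate:
  fixes P D :: "real^'n^'n"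
  assumes "orthogonal_matrix P"
  shows "\<bar>D $ i $ i\<bar> \<le> onorm ((*v) (P ** D ** transpose P))"
proof -
  have "D $ i $ i = (D *v axis i 1) $ i"
    by (simp add: matrix_vector_mult_def axis_def if_distrib cong: if_cong)
  also have "\<bar>\<dots>\<bar> \<le> norm (D *v axis i 1)"
    by (rule component_le_norm_cart)
  also have "\<dots> \<le> onorm ((*v) (P ** D ** transpose P))"
    using norm_le_onorm_orthogonal_conjugate[OF assms, of D "axis i 1"] by simp
  finally show ?thesis .
qed

lemma seq_err_snoc:
  "seq_err C L e0 (S @ [j]) = (mat 1 - C j ** L) *v seq_err C L e0 S"
  by (simp add: seq_err_def)

lemma seq_err_orthogonal_coordinates:
  fixes P :: "real^'n^'n" and \<Lambda> :: "nat \<Rightarrow> real^'n^'n"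
  assumes P: "orthogonal_matrix P"
    and spectral: "\<And>j. j \<in> set S \<Longrightarrow> diag_mat (\<Lambda> j) \<and> mat 1 - C j ** L = P ** \<Lambda> j ** transpose P"
  shows "(transpose P *v seq_err C L e0 S) $ i = (\<Prod>j\<leftarrow>S. \<Lambda> j $ i $ i) * (transpose P *v e0) $ i"
  using spectral
proof (induction S rule: rev_induct)
  case Nil
  then show ?case by (simp add: seq_err_def)
next
  case (snoc j S)
  then have diag: "diag_mat (\<Lambda> j)" and A: "mat 1 - C j ** L = P ** \<Lambda> j ** transpose P"
    by auto
  have "transpose P *v seq_err C L e0 (S @ [j])
      = (transpose P ** P) *v (\<Lambda> j *v (transpose P *v seq_err C L e0 S))"
    unfolding seq_err_snoc A by (simp only: matrix_vector_mul_assoc matrix_mul_assoc)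
  also have "\<dots> = \<Lambda> j *v (transpose P *v seq_err C L e0 S)"
    using P by (simp add: orthogonal_matrix)
  finally show ?case
    using snoc diag_mat_matrix_vector_nth[OF diag] by (simp add: ac_simps)
qed

lemma h_fun_orthogonal_diagonalization:
  fixes P :: "real^'n^'n" and \<Lambda> :: "nat \<Rightarrow> real^'n^'n"
  assumes P: "orthogonal_matrix P"
    and spectral: "\<And>j. j \<in> set S \<Longrightarrow> diag_mat (\<Lambda> j) \<and> mat 1 - C j ** L = P ** \<Lambda> j ** transpose P"
  shows "h_fun C L e0 S = (\<Sum>i\<in>UNIV. (\<Prod>j\<leftarrow>S. (\<Lambda> j $ i $ i)\<^sup>2) * ((transpose P *v e0) $ i)\<^sup>2)"
proof -
  have "h_fun C L e0 S = (norm (transpose P *v seq_err C L e0 S))\<^sup>2"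
    using P norm_orthogonal_matrix_vector[of "transpose P" "seq_err C L e0 S"]
    by (simp add: h_fun_def)
  also have "\<dots> = (\<Sum>i\<in>UNIV. ((transpose P *v seq_err C L e0 S) $ i)\<^sup>2)"
    unfolding power2_norm_eq_inner inner_vec_def by (simp add: power2_eq_square)
  finally show ?thesis
    using seq_err_orthogonal_coordinates[OF P spectral]
    by (simp add: power_mult_distrib prod_list_power o_def)
qed

theorem proposition2:
  fixes K :: nat
    and L :: "real^'n^'n"
    and e0 :: "real^'n"
    and C :: "nat \<Rightarrow> real^'n^'n"
    and P :: "real^'n^'n"
    and \<Lambda> :: "nat \<Rightarrow> real^'n^'n"
  assumes "K \<ge> 1"
    and "orthogonal_matrix P"
    and "\<And>j. j \<in> {1..K} \<Longrightarrow> diag_mat (\<Lambda> j)"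
    and "\<And>j. j \<in> {1..K} \<Longrightarrow> mat 1 - C j ** L = P ** \<Lambda> j ** matrix_inv P"
    and "\<And>j. j \<in> {1..K} \<Longrightarrow> onorm (\<lambda>x. (mat 1 - C j ** L) *v x) \<le> 1"
  shows "\<forall>S S' \<omega>. set S' \<subseteq> {1..K} \<and> (\<exists>T. S' = S @ T) \<and> \<omega> \<in> {1..K} \<longrightarrow>
           h_fun C L e0 S - h_fun C L e0 (S @ [\<omega>]) \<ge> h_fun C L e0 S' - h_fun C L e0 (S' @ [\<omega>])"
proof (intro allI impI)
  fix S S' \<omega>
  assume "set S' \<subseteq> {1..K} \<and> (\<exists>T. S' = S @ T) \<and> \<omega> \<in> {1..K}"
  then obtain T where S': "S' = S @ T" and in_K: "set (S @ T @ [\<omega>]) \<subseteq> {1..K}"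
    by auto
  have spectral: "diag_mat (\<Lambda> j) \<and> mat 1 - C j ** L = P ** \<Lambda> j ** transpose P"
    if "j \<in> {1..K}" for j
    using assms(3,4)[OF that] matrix_inv_orthogonal_matrix[OF assms(2)] by simp
  have h_fun_eq: "h_fun C L e0 R
      = (\<Sum>i\<in>UNIV. (\<Prod>j\<leftarrow>R. (\<Lambda> j $ i $ i)\<^sup>2) * ((transpose P *v e0) $ i)\<^sup>2)"
    if "set R \<subseteq> {1..K}" for R
    using h_fun_orthogonal_diagonalization[OF assms(2)] spectral that by blast
  have eigenvalue_sq: "0 \<le> (\<Lambda> j $ i $ i)\<^sup>2 \<and> (\<Lambda> j $ i $ i)\<^sup>2 \<le> 1"
    if "j \<in> set (S @ T @ [\<omega>])" for j i
  proof -
    have j: "j \<in> {1..K}"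
      using in_K that by blast
    show ?thesis
      using abs_diagonal_entry_le_onorm_orthogonal_conjugate[OF assms(2), of "\<Lambda> j" i]
        assms(5)[OF j] spectral[OF j] by (simp add: abs_square_le_1)
  qed
  from sum_prod_list_sequence_supermodular[where a = "\<lambda>i. ((transpose P *v e0) $ i)\<^sup>2", OF eigenvalue_sq]
  show "h_fun C L e0 S - h_fun C L e0 (S @ [\<omega>]) \<ge> h_fun C L e0 S' - h_fun C L e0 (S' @ [\<omega>])"
    unfolding S' using in_K by (simp add: h_fun_eq)
qed

end
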